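(* Suppose $K$ is a field, $\tau_{(i)}\neq0$ for all $i\in\Omega$, and that for all $B,D\in\mathcal{I}(\overline{\mathbf{P}})$, $|B|=|D|$ implies $\pi(\Omega,B)=\pi(\Omega,D)$. Then $\mathbf{P}$ is hierarchical.
   Context: $\Omega$ is a finite set and $\mathbf{P}=(\Omega,\preccurlyeq_{\mathbf{P}})$ a poset; $\overline{\mathbf{P}}$ is the dual poset and $\mathcal{I}(\overline{\mathbf{P}})$ its set of ideals (up-closed subsets of $\mathbf{P}$). For $Y\subseteq\Omega$: $\max(Y)$ is the set of maximal elements of $Y$ w.r.t. $\preccurlyeq_{\mathbf{P}}$; $\mathcal{I}(Y)$ is the set of down-closed subsets of $Y$. $\tau,\eta\in K^{\Omega}$. For $D,I\subseteq\Omega$, $\varphi(D,I)=(-1)^{|I\cap D|}\big(\prod_{i\in I-\max(I)}\tau_{(i)}\big)\big(\prod_{i\in\max(I)-D}\eta_{(i)}\big)$ if $I\cap D\subseteq\max(I)$, and $0$ otherwise; for $D\subseteq Y\subseteq\Omega$, $\pi(Y,D)=\sum_{I\in\mathcal{I}(Y)}\varphi(D,I)x^{|I|}\in K[x]$. $\mathrm{len}(y)$ is the largest cardinality of a chain in $\mathbf{P}$ with greatest element $y$; $\mathbf{P}$ is hierarchical if $\mathrm{len}(u)+1\leqslant\mathrm{len}(v)$ implies $u\preccurlyeq_{\mathbf{P}}v$. *)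

theory Defs
  imports "HOL-Computational_Algebra.Polynomial"
begin

definition poset_on :: "'a set \<Rightarrow> ('a \<Rightarrow> 'a \<Rightarrow> bool) \<Rightarrow> bool" where
  "poset_on \<Omega> le \<longleftrightarrow>
     (\<forall>x\<in>\<Omega>. le x x) \<and>
     (\<forall>x\<in>\<Omega>. \<forall>y\<in>\<Omega>. le x y \<and> le y x \<longrightarrow> x = y) \<and>
     (\<forall>x\<in>\<Omega>. \<forall>y\<in>\<Omega>. \<forall>z\<in>\<Omega>. le x y \<and> le y z \<longrightarrow> le x z)"

definition maxel :: "('a \<Rightarrow> 'a \<Rightarrow> bool) \<Rightarrow> 'a set \<Rightarrow> 'a set" where
  "maxel le Y = {y \<in> Y. \<forall>z\<in>Y. le y z \<longrightarrow> z = y}"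

definition down_sets :: "('a \<Rightarrow> 'a \<Rightarrow> bool) \<Rightarrow> 'a set \<Rightarrow> 'a set set" where
  "down_sets le Y = {I. I \<subseteq> Y \<and> (\<forall>i\<in>I. \<forall>j\<in>Y. le j i \<longrightarrow> j \<in> I)}"

definition dual_ideals :: "'a set \<Rightarrow> ('a \<Rightarrow> 'a \<Rightarrow> bool) \<Rightarrow> 'a set set" where
  "dual_ideals \<Omega> le = {I. I \<subseteq> \<Omega> \<and> (\<forall>i\<in>I. \<forall>j\<in>\<Omega>. le i j \<longrightarrow> j \<in> I)}"

definition phi :: "('a \<Rightarrow> 'a \<Rightarrow> bool) \<Rightarrow> ('a \<Rightarrow> 'k::field) \<Rightarrow> ('a \<Rightarrow> 'k)
                    \<Rightarrow> 'a set \<Rightarrow> 'a set \<Rightarrow> 'k" where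
  "phi le \<tau> \<eta> D I =
     (if I \<inter> D \<subseteq> maxel le I
      then (-1) ^ card (I \<inter> D) * (\<Prod>i\<in>I - maxel le I. \<tau> i) * (\<Prod>i\<in>maxel le I - D. \<eta> i)
      else 0)"

definition pi_poly :: "('a \<Rightarrow> 'a \<Rightarrow> bool) \<Rightarrow> ('a \<Rightarrow> 'k::field) \<Rightarrow> ('a \<Rightarrow> 'k)
                       \<Rightarrow> 'a set \<Rightarrow> 'a set \<Rightarrow> 'k poly" where
  "pi_poly le \<tau> \<eta> Y D = (\<Sum>I\<in>down_sets le Y. monom (phi le \<tau> \<eta> D I) (card I))"

definition chain_top :: "'a set \<Rightarrow> ('a \<Rightarrow> 'a \<Rightarrow> bool) \<Rightarrow> 'a \<Rightarrow> 'a set \<Rightarrow> bool" where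
  "chain_top \<Omega> le y C \<longleftrightarrow> C \<subseteq> \<Omega> \<and> y \<in> C \<and>
     (\<forall>a\<in>C. \<forall>b\<in>C. le a b \<or> le b a) \<and> (\<forall>c\<in>C. le c y)"

definition len :: "'a set \<Rightarrow> ('a \<Rightarrow> 'a \<Rightarrow> bool) \<Rightarrow> 'a \<Rightarrow> nat" where
  "len \<Omega> le y = Max (card ` {C. chain_top \<Omega> le y C})"

definition hierarchical :: "'a set \<Rightarrow> ('a \<Rightarrow> 'a \<Rightarrow> bool) \<Rightarrow> bool" where
  "hierarchical \<Omega> le \<longleftrightarrow>
     (\<forall>u\<in>\<Omega>. \<forall>v\<in>\<Omega>. len \<Omega> le u + 1 \<le> len \<Omega> le v \<longrightarrow> le u v)"

end

(*
  For an up-set D, a down-set I with phi(D, I) \<noteq> 0 can meet D only in minimal elements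
  of D, so deg pi(\<Omega>, D) \<le> |\<Omega> - D| + |min D|.  If every element outside D lies below a
  minimal element of D, this bound is attained: (\<Omega> - D) \<union> min D is the only down-set of
  that size with phi \<noteq> 0, and its phi-value is a signed product of \<tau>'s.

  If P is not hierarchical, let l be the largest length of an element u with
  len u + 1 \<le> len v but not u \<le> v for some v.  Let F be the set of elements of length at
  most l + 1 all of whose strict upper bounds have length at least l + 2, and D its
  up-closure; then min D = F and D satisfies the covering condition above.  The violation
  at level l provides t \<in> F and s \<notin> D strictly below some y \<in> F of length l + 1.
  Replacing t by s gives an up-set D' with |D'| = |D|, and by maximality of l every minimal
  element of D' other than s lies in F - {t, y}.  Hence deg pi(\<Omega>, D') < deg pi(\<Omega>, D),
  although the two polynomials must coincide.
*)

theory Submission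
  imports Defs
begin

definition minel :: "('a \<Rightarrow> 'a \<Rightarrow> bool) \<Rightarrow> 'a set \<Rightarrow> 'a set" where
  "minel le D = {d \<in> D. \<forall>e\<in>D. le e d \<longrightarrow> e = d}"

lemma minel_subset: "minel le D \<subseteq> D"
  by (auto simp: minel_def)

lemma dual_ideals_subset: "D \<in> dual_ideals \<Omega> le \<Longrightarrow> D \<subseteq> \<Omega>"
  by (simp add: dual_ideals_def)

lemma dual_ideals_upward: "D \<in> dual_ideals \<Omega> le \<Longrightarrow> i \<in> D \<Longrightarrow> j \<in> \<Omega> \<Longrightarrow> le i j \<Longrightarrow> j \<in> D"
  by (simp add: dual_ideals_def)

lemma down_sets_subset: "I \<in> down_sets le Y \<Longrightarrow> I \<subseteq> Y"
  by (simp add: down_sets_def)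

lemma down_sets_downward: "I \<in> down_sets le Y \<Longrightarrow> i \<in> I \<Longrightarrow> j \<in> Y \<Longrightarrow> le j i \<Longrightarrow> j \<in> I"
  by (simp add: down_sets_def)

lemma coeff_pi_poly:
  "coeff (pi_poly le \<tau> \<eta> Y D) k = (\<Sum>I\<in>down_sets le Y. if card I = k then phi le \<tau> \<eta> D I else 0)"
  unfolding pi_poly_def by (simp add: coeff_sum)

lemma finite_down_sets: "finite Y \<Longrightarrow> finite (down_sets le Y)"
  by (rule finite_subset[of _ "Pow Y"]) (auto simp: down_sets_def)

lemma phi_neq_0_imp_Int_subset_minel:
  assumes D: "D \<in> dual_ideals \<Omega> le" and I: "I \<in> down_sets le \<Omega>"
    and nz: "phi le \<tau> \<eta> D I \<noteq> 0"
  shows "I \<inter> D \<subseteq> minel le D"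
proof
  fix a assume a: "a \<in> I \<inter> D"
  have "I \<inter> D \<subseteq> maxel le I" using nz unfolding phi_def by (auto split: if_splits)
  moreover have "e \<in> I" if "e \<in> D" "le e a" for e
    using down_sets_downward[OF I] dual_ideals_subset[OF D] a that by blast
  ultimately show "a \<in> minel le D"
    using a unfolding minel_def maxel_def by blast
qed

lemma card_le_if_phi_neq_0:
  assumes "finite \<Omega>" and D: "D \<in> dual_ideals \<Omega> le" and I: "I \<in> down_sets le \<Omega>"
    and nz: "phi le \<tau> \<eta> D I \<noteq> 0"
  shows "card I \<le> card (\<Omega> - D) + card (minel le D)"
proof -
  have "I \<subseteq> \<Omega>" "D \<subseteq> \<Omega>" using down_sets_subset[OF I] dual_ideals_subset[OF D] .
  then have "finite I" "finite (minel le D)"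
    using \<open>finite \<Omega>\<close> minel_subset by (metis finite_subset)+
  have "card I = card (I \<inter> D) + card (I - D)"
    using \<open>finite I\<close> by (rule card_Int_Diff)
  also have "card (I \<inter> D) \<le> card (minel le D)"
    using phi_neq_0_imp_Int_subset_minel[OF D I nz] \<open>finite (minel le D)\<close> by (rule card_mono[rotated])
  also have "card (I - D) \<le> card (\<Omega> - D)"
    using \<open>I \<subseteq> \<Omega>\<close> \<open>finite \<Omega>\<close> by (intro card_mono) auto
  finally show ?thesis by simp
qed

lemma degree_pi_poly_le:
  assumes "finite \<Omega>" and "D \<in> dual_ideals \<Omega> le"
  shows "degree (pi_poly le \<tau> \<eta> \<Omega> D) \<le> card (\<Omega> - D) + card (minel le D)"
proof (rule degree_le, intro allI impI)
  fix n assume n: "card (\<Omega> - D) + card (minel le D) < n"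
  have vanish: "(if card I = n then phi le \<tau> \<eta> D I else 0) = 0" if "I \<in> down_sets le \<Omega>" for I
    using card_le_if_phi_neq_0[OF assms that, of \<tau> \<eta>] n by (cases "phi le \<tau> \<eta> D I = 0") auto
  then show "coeff (pi_poly le \<tau> \<eta> \<Omega> D) n = 0"
    unfolding coeff_pi_poly by (intro sum.neutral ballI vanish)
qed

lemma diff_Un_minel_in_down_sets:
  assumes D: "D \<in> dual_ideals \<Omega> le"
  shows "(\<Omega> - D) \<union> minel le D \<in> down_sets le \<Omega>"
  unfolding down_sets_def
proof (intro CollectI conjI ballI impI)
  show "(\<Omega> - D) \<union> minel le D \<subseteq> \<Omega>"
    using dual_ideals_subset[OF D] minel_subset[of le D] by blast
next
  fix i j assume i: "i \<in> (\<Omega> - D) \<union> minel le D" and j: "j \<in> \<Omega>" "le j i"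
  show "j \<in> (\<Omega> - D) \<union> minel le D"
  proof (cases "j \<in> D")
    case True
    moreover have "i \<in> \<Omega>" using i dual_ideals_subset[OF D] minel_subset[of le D] by blast
    ultimately have "i \<in> D" using dual_ideals_upward[OF D] j by blast
    with i have "i \<in> minel le D" by blast
    with True j have "j = i" unfolding minel_def by blast
    with i show ?thesis by simp
  qed (use j in blast)
qed

lemma eq_diff_Un_minel_if_phi_neq_0:
  assumes "finite \<Omega>" and D: "D \<in> dual_ideals \<Omega> le" and I: "I \<in> down_sets le \<Omega>"
    and nz: "phi le \<tau> \<eta> D I \<noteq> 0"
    and card: "card I = card (\<Omega> - D) + card (minel le D)"
  shows "I = (\<Omega> - D) \<union> minel le D"
proof -
  have "I \<subseteq> \<Omega>" "D \<subseteq> \<Omega>" using down_sets_subset[OF I] dual_ideals_subset[OF D] .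
  then have "finite I" "finite (minel le D)"
    using \<open>finite \<Omega>\<close> minel_subset by (metis finite_subset)+
  have sub_min: "I \<inter> D \<subseteq> minel le D" using phi_neq_0_imp_Int_subset_minel[OF D I nz] .
  have sub_compl: "I - D \<subseteq> \<Omega> - D" using \<open>I \<subseteq> \<Omega>\<close> by blast
  have "card (I \<inter> D) \<le> card (minel le D)" "card (I - D) \<le> card (\<Omega> - D)"
    using sub_min sub_compl \<open>finite (minel le D)\<close> \<open>finite \<Omega>\<close> by (auto intro: card_mono)
  moreover have "card I = card (I \<inter> D) + card (I - D)"
    using \<open>finite I\<close> by (rule card_Int_Diff)
  ultimately have "card (I \<inter> D) = card (minel le D)" "card (I - D) = card (\<Omega> - D)"
    using card by linarith+
  then have "I \<inter> D = minel le D" "I - D = \<Omega> - D"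
    using card_subset_eq[OF \<open>finite (minel le D)\<close> sub_min]
      card_subset_eq[OF finite_Diff[OF \<open>finite \<Omega>\<close>] sub_compl] by auto
  then show ?thesis by blast
qed

lemma maxel_diff_Un_minel:
  assumes D: "D \<in> dual_ideals \<Omega> le"
    and covered: "\<forall>c\<in>\<Omega> - D. \<exists>q\<in>minel le D. le c q"
  shows "maxel le ((\<Omega> - D) \<union> minel le D) = minel le D"
proof (intro equalityI subsetI)
  let ?I = "(\<Omega> - D) \<union> minel le D"
  fix c assume c: "c \<in> maxel le ?I"
  then have cI: "c \<in> ?I" and c_max: "\<And>z. z \<in> ?I \<Longrightarrow> le c z \<Longrightarrow> z = c"
    unfolding maxel_def by blast+
  show "c \<in> minel le D"
  proof (cases "c \<in> D")
    case False
    with cI have "c \<in> \<Omega> - D" using minel_subset[of le D] by blast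
    with covered obtain q where q: "q \<in> minel le D" "le c q" by blast
    then have "q = c" using c_max by blast
    with q False show ?thesis using minel_subset[of le D] by blast
  qed (use cI in blast)
next
  let ?I = "(\<Omega> - D) \<union> minel le D"
  fix q assume q: "q \<in> minel le D"
  have "z = q" if z: "z \<in> ?I" "le q z" for z
  proof -
    have "z \<in> D"
      using dual_ideals_upward[OF D] dual_ideals_subset[OF D] q z minel_subset[of le D] by blast
    then show "z = q" using q z unfolding minel_def by blast
  qed
  with q show "q \<in> maxel le ?I" unfolding maxel_def by blast
qed

lemma phi_diff_Un_minel_neq_0:
  assumes "finite \<Omega>" and D: "D \<in> dual_ideals \<Omega> le"
    and covered: "\<forall>c\<in>\<Omega> - D. \<exists>q\<in>minel le D. le c q"
    and \<tau>: "\<forall>i\<in>\<Omega>. \<tau> i \<noteq> 0"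
  shows "phi le \<tau> \<eta> D ((\<Omega> - D) \<union> minel le D) \<noteq> 0"
proof -
  let ?I = "(\<Omega> - D) \<union> minel le D"
  have I_sub: "?I \<subseteq> \<Omega>" using dual_ideals_subset[OF D] minel_subset[of le D] by blast
  then have "finite ?I" using \<open>finite \<Omega>\<close> by (rule finite_subset)
  then have "(\<Prod>i\<in>?I - maxel le ?I. \<tau> i) \<noteq> 0" using \<tau> I_sub by (auto simp: prod_zero_iff)
  moreover have Int: "?I \<inter> D = minel le D" and no_\<eta>: "minel le D - D = {}"
    using minel_subset[of le D] by blast+
  ultimately show ?thesis unfolding phi_def maxel_diff_Un_minel[OF D covered] Int no_\<eta> by simp
qed

lemma degree_pi_poly_eq:
  assumes "finite \<Omega>" and D: "D \<in> dual_ideals \<Omega> le"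
    and covered: "\<forall>c\<in>\<Omega> - D. \<exists>q\<in>minel le D. le c q"
    and \<tau>: "\<forall>i\<in>\<Omega>. \<tau> i \<noteq> 0"
  shows "degree (pi_poly le \<tau> \<eta> \<Omega> D) = card (\<Omega> - D) + card (minel le D)"
proof -
  let ?N = "card (\<Omega> - D) + card (minel le D)" and ?I = "(\<Omega> - D) \<union> minel le D"
  have I: "?I \<in> down_sets le \<Omega>" using diff_Un_minel_in_down_sets[OF D] .
  have "card ?I = ?N"
    using \<open>finite \<Omega>\<close> dual_ideals_subset[OF D] minel_subset[of le D]
    by (subst card_Un_disjoint) (auto intro: finite_subset)
  moreover have "(\<Sum>J\<in>down_sets le \<Omega> - {?I}. if card J = ?N then phi le \<tau> \<eta> D J else 0) = 0"
  proof (intro sum.neutral ballI)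
    fix J assume "J \<in> down_sets le \<Omega> - {?I}"
    then show "(if card J = ?N then phi le \<tau> \<eta> D J else 0) = 0"
      using eq_diff_Un_minel_if_phi_neq_0[OF \<open>finite \<Omega>\<close> D, of J \<tau> \<eta>] by auto
  qed
  ultimately have "coeff (pi_poly le \<tau> \<eta> \<Omega> D) ?N = phi le \<tau> \<eta> D ?I"
    unfolding coeff_pi_poly sum.remove[OF finite_down_sets[OF \<open>finite \<Omega>\<close>] I] by simp
  then have "?N \<le> degree (pi_poly le \<tau> \<eta> \<Omega> D)"
    using phi_diff_Un_minel_neq_0[OF assms] by (intro le_degree) simp
  then show ?thesis using degree_pi_poly_le[OF \<open>finite \<Omega>\<close> D] by (rule antisym[rotated])
qed

lemma degree_pi_poly_less:
  assumes "finite \<Omega>" and D: "D \<in> dual_ideals \<Omega> le" and D': "D' \<in> dual_ideals \<Omega> le"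
    and covered: "\<forall>c\<in>\<Omega> - D. \<exists>q\<in>minel le D. le c q"
    and \<tau>: "\<forall>i\<in>\<Omega>. \<tau> i \<noteq> 0"
    and card_eq: "card D' = card D" and card_minel_less: "card (minel le D') < card (minel le D)"
  shows "degree (pi_poly le \<tau> \<eta> \<Omega> D') < degree (pi_poly le \<tau> \<eta> \<Omega> D)"
proof -
  have "card (\<Omega> - D') = card (\<Omega> - D)"
    using card_eq card_Diff_subset[OF finite_subset[OF _ \<open>finite \<Omega>\<close>]]
      dual_ideals_subset[OF D] dual_ideals_subset[OF D'] by metis
  then show ?thesis
    using degree_pi_poly_le[OF \<open>finite \<Omega>\<close> D', of \<tau> \<eta>] degree_pi_poly_eq[OF \<open>finite \<Omega>\<close> D covered \<tau>, of \<eta>]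
      card_minel_less by linarith
qed

locale finite_poset =
  fixes \<Omega> :: "'a set" and le :: "'a \<Rightarrow> 'a \<Rightarrow> bool"
  assumes finite_carrier: "finite \<Omega>" and poset: "poset_on \<Omega> le"
begin

lemma poset_refl: "x \<in> \<Omega> \<Longrightarrow> le x x"
  using poset unfolding poset_on_def by blast

lemma poset_antisym: "x \<in> \<Omega> \<Longrightarrow> y \<in> \<Omega> \<Longrightarrow> le x y \<Longrightarrow> le y x \<Longrightarrow> x = y"
  using poset unfolding poset_on_def by blast

lemma poset_trans: "x \<in> \<Omega> \<Longrightarrow> y \<in> \<Omega> \<Longrightarrow> z \<in> \<Omega> \<Longrightarrow> le x y \<Longrightarrow> le y z \<Longrightarrow> le x z"
  using poset unfolding poset_on_def by blast

lemma finite_chains: "finite {C. chain_top \<Omega> le y C}"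
  by (rule finite_subset[of _ "Pow \<Omega>"]) (auto simp: chain_top_def finite_carrier)

lemma chain_top_singleton: "y \<in> \<Omega> \<Longrightarrow> chain_top \<Omega> le y {y}"
  by (auto simp: chain_top_def poset_refl)

lemma card_le_len: "chain_top \<Omega> le y C \<Longrightarrow> card C \<le> len \<Omega> le y"
  unfolding len_def using finite_chains by (auto intro!: Max_ge)

lemma len_attained:
  assumes "y \<in> \<Omega>"
  obtains C where "chain_top \<Omega> le y C" "card C = len \<Omega> le y"
proof -
  have "{C. chain_top \<Omega> le y C} \<noteq> {}" using chain_top_singleton[OF assms] by blast
  then have "len \<Omega> le y \<in> card ` {C. chain_top \<Omega> le y C}"
    unfolding len_def using finite_chains by (intro Max_in) auto
  then show ?thesis using that by (metis (no_types, lifting) imageE mem_Collect_eq)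
qed

lemma len_ge_1: "y \<in> \<Omega> \<Longrightarrow> 1 \<le> len \<Omega> le y"
  using card_le_len[OF chain_top_singleton] by fastforce

lemma finite_chain: "chain_top \<Omega> le y C \<Longrightarrow> finite C"
  using finite_carrier unfolding chain_top_def by (auto intro: finite_subset)

lemma len_strict_mono:
  assumes "x \<in> \<Omega>" "y \<in> \<Omega>" "le x y" "x \<noteq> y"
  shows "len \<Omega> le x < len \<Omega> le y"
proof -
  obtain C where C: "chain_top \<Omega> le x C" "card C = len \<Omega> le x"
    using len_attained[OF assms(1)] .
  have "y \<notin> C"
  proof
    assume "y \<in> C"
    then have "le y x" using C(1) unfolding chain_top_def by blast
    then show False using poset_antisym assms by blast
  qed
  moreover have "chain_top \<Omega> le y (insert y C)"
    using C(1) assms unfolding chain_top_def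
    by (auto intro: poset_refl) (meson poset_trans subsetD)+
  then have "card (insert y C) \<le> len \<Omega> le y" by (rule card_le_len)
  ultimately show ?thesis using finite_chain[OF C(1)] C(2) by simp
qed

text \<open>The predecessor is the largest element below the top of a longest chain.\<close>
lemma len_predecessor:
  assumes y: "y \<in> \<Omega>" and len_y: "2 \<le> len \<Omega> le y"
  shows "\<exists>x\<in>\<Omega>. le x y \<and> len \<Omega> le x + 1 = len \<Omega> le y"
proof -
  obtain C where C: "chain_top \<Omega> le y C" "card C = len \<Omega> le y"
    using len_attained[OF y] .
  let ?C = "C - {y}"
  have "finite C" "y \<in> C" "C \<subseteq> \<Omega>" using finite_chain[OF C(1)] C(1) unfolding chain_top_def by auto
  have card_C': "card ?C = len \<Omega> le y - 1" using C(2) \<open>y \<in> C\<close> \<open>finite C\<close> by simp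
  then have "card ?C \<noteq> 0" using len_y by simp
  then have "?C \<noteq> {}" by (metis card.empty)
  then have "Max (len \<Omega> le ` ?C) \<in> len \<Omega> le ` ?C" using \<open>finite C\<close> by (intro Max_in) auto
  then obtain x where x: "x \<in> ?C" "len \<Omega> le x = Max (len \<Omega> le ` ?C)" by (metis imageE)
  have x_max: "len \<Omega> le c \<le> len \<Omega> le x" if "c \<in> ?C" for c
    using x(2) \<open>finite C\<close> that by simp
  have xO: "x \<in> \<Omega>" and "le x y" "x \<noteq> y" using C(1) x \<open>C \<subseteq> \<Omega>\<close> unfolding chain_top_def by auto
  have "chain_top \<Omega> le x ?C"
    unfolding chain_top_def
  proof (intro conjI ballI)
    show "?C \<subseteq> \<Omega>" "x \<in> ?C" using \<open>C \<subseteq> \<Omega>\<close> x by auto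
  next
    fix a b assume "a \<in> ?C" "b \<in> ?C"
    then show "le a b \<or> le b a" using C(1) unfolding chain_top_def by auto
  next
    fix c assume c: "c \<in> ?C"
    have "le c x \<or> le x c" using C(1) c x unfolding chain_top_def by auto
    moreover have "\<not> (le x c \<and> x \<noteq> c)"
      using len_strict_mono[of x c] x_max[OF c] c xO \<open>C \<subseteq> \<Omega>\<close> by force
    ultimately show "le c x" using poset_refl c \<open>C \<subseteq> \<Omega>\<close> by auto
  qed
  then have "len \<Omega> le y - 1 \<le> len \<Omega> le x" using card_C' by (metis card_le_len)
  moreover have "len \<Omega> le x < len \<Omega> le y" using len_strict_mono xO y \<open>le x y\<close> \<open>x \<noteq> y\<close> by blast
  ultimately show ?thesis using xO \<open>le x y\<close> by force
qed

lemma len_attained_below: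
  "y \<in> \<Omega> \<Longrightarrow> 1 \<le> k \<Longrightarrow> k \<le> len \<Omega> le y \<Longrightarrow> \<exists>x\<in>\<Omega>. le x y \<and> len \<Omega> le x = k"
proof (induction "len \<Omega> le y - k" arbitrary: y)
  case 0
  then show ?case using poset_refl by force
next
  case (Suc m)
  then have "2 \<le> len \<Omega> le y" by arith
  then obtain x where x: "x \<in> \<Omega>" "le x y" "len \<Omega> le x + 1 = len \<Omega> le y"
    using len_predecessor[OF Suc.prems(1)] by blast
  have "m = len \<Omega> le x - k" "k \<le> len \<Omega> le x" using x(3) Suc.hyps(2) by arith+
  then obtain x' where "x' \<in> \<Omega>" "le x' x" "len \<Omega> le x' = k"
    using Suc.hyps(1) x(1) Suc.prems(2) by blast
  then show ?case using x poset_trans Suc.prems(1) by blast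
qed

end

definition up_closure :: "'a set \<Rightarrow> ('a \<Rightarrow> 'a \<Rightarrow> bool) \<Rightarrow> 'a set \<Rightarrow> 'a set" where
  "up_closure \<Omega> le S = {y \<in> \<Omega>. \<exists>q\<in>S. le q y}"

definition frontier :: "'a set \<Rightarrow> ('a \<Rightarrow> 'a \<Rightarrow> bool) \<Rightarrow> nat \<Rightarrow> 'a set" where
  "frontier \<Omega> le l =
     {x \<in> \<Omega>. len \<Omega> le x \<le> l + 1 \<and> (\<forall>z\<in>\<Omega>. le x z \<and> z \<noteq> x \<longrightarrow> l + 2 \<le> len \<Omega> le z)}"

definition hierarchical_above :: "'a set \<Rightarrow> ('a \<Rightarrow> 'a \<Rightarrow> bool) \<Rightarrow> nat \<Rightarrow> bool" where
  "hierarchical_above \<Omega> le l \<longleftrightarrow>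
     (\<forall>y\<in>\<Omega>. \<forall>d\<in>\<Omega>. l + 1 \<le> len \<Omega> le y \<longrightarrow> len \<Omega> le y + 1 \<le> len \<Omega> le d \<longrightarrow> le y d)"

lemma frontier_subset: "frontier \<Omega> le l \<subseteq> \<Omega>"
  by (auto simp: frontier_def)

lemma up_closure_subset: "up_closure \<Omega> le S \<subseteq> \<Omega>"
  by (auto simp: up_closure_def)

context finite_poset
begin

lemma subset_up_closure: "S \<subseteq> \<Omega> \<Longrightarrow> S \<subseteq> up_closure \<Omega> le S"
  using poset_refl by (fastforce simp: up_closure_def)

lemma up_closure_in_dual_ideals:
  assumes "S \<subseteq> \<Omega>"
  shows "up_closure \<Omega> le S \<in> dual_ideals \<Omega> le"
  unfolding dual_ideals_def up_closure_def using assms by (auto intro: poset_trans)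

lemma minel_up_closure:
  assumes "S \<subseteq> \<Omega>" and antichain: "\<forall>x\<in>S. \<forall>y\<in>S. le x y \<longrightarrow> x = y"
  shows "minel le (up_closure \<Omega> le S) = S"
proof (intro equalityI subsetI)
  fix d assume d: "d \<in> minel le (up_closure \<Omega> le S)"
  then obtain q where "q \<in> S" "le q d" unfolding minel_def up_closure_def by blast
  moreover from this have "q = d" using d subset_up_closure[OF assms(1)] unfolding minel_def by blast
  ultimately show "d \<in> S" by simp
next
  fix q assume q: "q \<in> S"
  have "e = q" if e: "e \<in> up_closure \<Omega> le S" "le e q" for e
  proof -
    obtain q' where "q' \<in> S" "le q' e" "e \<in> \<Omega>" using e(1) unfolding up_closure_def by blast
    then have "le q' q" using poset_trans e(2) q assms(1) by blast
    then have "q' = q" using antichain q \<open>q' \<in> S\<close> by blast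
    then show "e = q" using poset_antisym \<open>le q' e\<close> e(2) \<open>e \<in> \<Omega>\<close> q assms(1) by blast
  qed
  then show "q \<in> minel le (up_closure \<Omega> le S)"
    using q subset_up_closure[OF assms(1)] unfolding minel_def by blast
qed

lemma strictly_below_antichain_notin_up_closure:
  assumes "S \<subseteq> \<Omega>" and antichain: "\<forall>x\<in>S. \<forall>y\<in>S. le x y \<longrightarrow> x = y"
    and y: "y \<in> S" and x: "x \<in> \<Omega>" "le x y" "x \<noteq> y"
  shows "x \<notin> up_closure \<Omega> le S"
proof
  assume "x \<in> up_closure \<Omega> le S"
  then obtain q where q: "q \<in> S" "le q x" unfolding up_closure_def by blast
  then have "q = y" using antichain y poset_trans x assms(1) by blast
  then show False using poset_antisym q x y assms(1) by blast
qed

lemma antichain_frontier: "\<forall>x\<in>frontier \<Omega> le l. \<forall>y\<in>frontier \<Omega> le l. le x y \<longrightarrow> x = y"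
  unfolding frontier_def by fastforce

lemma minel_up_closure_frontier: "minel le (up_closure \<Omega> le (frontier \<Omega> le l)) = frontier \<Omega> le l"
  by (rule minel_up_closure[OF frontier_subset antichain_frontier])

lemma len_eq_imp_frontier:
  assumes "x \<in> \<Omega>" "len \<Omega> le x = l + 1"
  shows "x \<in> frontier \<Omega> le l"
  using assms len_strict_mono[of x] unfolding frontier_def by fastforce

lemma len_gt_imp_in_up_closure_frontier:
  assumes "y \<in> \<Omega>" "l + 1 \<le> len \<Omega> le y"
  shows "y \<in> up_closure \<Omega> le (frontier \<Omega> le l)"
proof -
  obtain x where "x \<in> \<Omega>" "le x y" "len \<Omega> le x = l + 1"
    using len_attained_below[OF assms(1), of "l + 1"] assms(2) by auto
  then show ?thesis using len_eq_imp_frontier assms(1) unfolding up_closure_def by blast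
qed

lemma frontier_dominates_complement:
  "\<forall>c\<in>\<Omega> - up_closure \<Omega> le (frontier \<Omega> le l). \<exists>q\<in>frontier \<Omega> le l. le c q"
proof
  fix c assume c: "c \<in> \<Omega> - up_closure \<Omega> le (frontier \<Omega> le l)"
  define S where "S = {z \<in> \<Omega>. le c z \<and> len \<Omega> le z \<le> l + 1}"
  have "\<not> l + 1 \<le> len \<Omega> le c" using c len_gt_imp_in_up_closure_frontier[of c l] by blast
  then have "len \<Omega> le c \<le> l" by simp
  then have "c \<in> S" unfolding S_def using c poset_refl by simp
  moreover have "\<forall>z. z \<in> S \<longrightarrow> len \<Omega> le z < l + 2" unfolding S_def by auto
  ultimately obtain z where z: "z \<in> S" and z_max: "\<And>z'. z' \<in> S \<Longrightarrow> len \<Omega> le z' \<le> len \<Omega> le z"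
    using ex_has_greatest_nat[of "\<lambda>z. z \<in> S" c "len \<Omega> le"] by blast
  have "l + 2 \<le> len \<Omega> le z'" if "z' \<in> \<Omega>" "le z z'" "z' \<noteq> z" for z'
  proof (rule ccontr)
    assume "\<not> l + 2 \<le> len \<Omega> le z'"
    then have "z' \<in> S" using z that poset_trans c unfolding S_def by auto
    then show False using z_max len_strict_mono[of z z'] z that unfolding S_def by fastforce
  qed
  then have "z \<in> frontier \<Omega> le l" using z unfolding S_def frontier_def by blast
  then show "\<exists>q\<in>frontier \<Omega> le l. le c q" using z unfolding S_def by blast
qed

lemma highest_violation:
  assumes "\<not> hierarchical \<Omega> le"
  obtains l u v where "u \<in> \<Omega>" "v \<in> \<Omega>" "len \<Omega> le u = l" "len \<Omega> le v = l + 1" "\<not> le u v"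
    and "hierarchical_above \<Omega> le l"
proof -
  let ?violates = "\<lambda>u. u \<in> \<Omega> \<and> (\<exists>v\<in>\<Omega>. len \<Omega> le u + 1 \<le> len \<Omega> le v \<and> \<not> le u v)"
  obtain u0 where "?violates u0" using assms unfolding hierarchical_def by blast
  moreover have "\<forall>u. ?violates u \<longrightarrow> len \<Omega> le u < Suc (Max (len \<Omega> le ` \<Omega>))"
    using finite_carrier by (simp add: le_imp_less_Suc)
  ultimately obtain u where u: "?violates u" and u_max: "\<And>u'. ?violates u' \<Longrightarrow> len \<Omega> le u' \<le> len \<Omega> le u"
    using ex_has_greatest_nat[of ?violates u0 "len \<Omega> le"] by blast
  then obtain v0 where v0: "v0 \<in> \<Omega>" "len \<Omega> le u + 1 \<le> len \<Omega> le v0" "\<not> le u v0" by blast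
  then obtain v where v: "v \<in> \<Omega>" "le v v0" "len \<Omega> le v = len \<Omega> le u + 1"
    using len_attained_below[OF v0(1), of "len \<Omega> le u + 1"] by auto
  have "\<not> le u v" using poset_trans u v v0 by blast
  moreover have "hierarchical_above \<Omega> le (len \<Omega> le u)"
    unfolding hierarchical_above_def using u_max by fastforce
  ultimately show ?thesis using that u v by blast
qed

lemma exchange_triple:
  assumes u: "u \<in> \<Omega>" and v: "v \<in> \<Omega>"
    and len_u: "len \<Omega> le u = l" and len_v: "len \<Omega> le v = l + 1" and not_uv: "\<not> le u v"
  obtains t y s where "t \<in> frontier \<Omega> le l" "y \<in> \<Omega>" "len \<Omega> le y = l + 1" "t \<noteq> y"
    and "s \<in> \<Omega>" "le s y" "s \<noteq> y" "l \<le> len \<Omega> le s" "\<not> le s t"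
proof (cases "u \<in> frontier \<Omega> le l")
  case True
  have "2 \<le> len \<Omega> le v" using len_v len_ge_1[OF u] len_u by simp
  then obtain w where w: "w \<in> \<Omega>" "le w v" "len \<Omega> le w + 1 = len \<Omega> le v"
    using len_predecessor[OF v] by blast
  have "\<not> le w u"
  proof
    assume "le w u"
    moreover have "w \<noteq> u" using w not_uv by blast
    ultimately have "len \<Omega> le w < len \<Omega> le u" using len_strict_mono w(1) u by blast
    then show False using w len_u len_v by simp
  qed
  moreover have "u \<noteq> v" "w \<noteq> v" using len_u len_v w by auto
  ultimately show ?thesis using that[of u v w] True v w len_u len_v by simp
next
  case False
  then obtain z where z: "z \<in> \<Omega>" "le u z" "z \<noteq> u" "\<not> l + 2 \<le> len \<Omega> le z"
    using u len_u unfolding frontier_def by auto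
  have "len \<Omega> le u < len \<Omega> le z" using len_strict_mono u z by blast
  then have "len \<Omega> le z = l + 1" using z(4) len_u by simp
  moreover have "v \<in> frontier \<Omega> le l" using len_eq_imp_frontier v len_v by blast
  moreover have "v \<noteq> z" using z(2) not_uv by blast
  ultimately show ?thesis using that[of v z u] z u len_u not_uv by simp
qed

lemma exchange_in_dual_ideals:
  assumes t: "t \<in> frontier \<Omega> le l"
    and s: "s \<in> \<Omega>" "l \<le> len \<Omega> le s" "\<not> le s t"
  defines "D \<equiv> up_closure \<Omega> le (frontier \<Omega> le l)"
  shows "insert s (D - {t}) \<in> dual_ideals \<Omega> le"
  unfolding dual_ideals_def
proof (intro CollectI conjI ballI impI)
  show "insert s (D - {t}) \<subseteq> \<Omega>" using s up_closure_subset[of \<Omega> le "frontier \<Omega> le l"] unfolding D_def by blast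
next
  fix i j assume i: "i \<in> insert s (D - {t})" and j: "j \<in> \<Omega>" "le i j"
  have D: "D \<in> dual_ideals \<Omega> le" unfolding D_def by (rule up_closure_in_dual_ideals[OF frontier_subset])
  have t_min: "t \<in> minel le D" using t unfolding D_def minel_up_closure_frontier .
  show "j \<in> insert s (D - {t})"
  proof (cases "i = s")
    case True
    show ?thesis
    proof (cases "j = s")
      case False
      then have "l + 1 \<le> len \<Omega> le j" using len_strict_mono[of s j] s j True by fastforce
      then have "j \<in> D" using len_gt_imp_in_up_closure_frontier j unfolding D_def by blast
      moreover have "j \<noteq> t" using s True j by blast
      ultimately show ?thesis by blast
    qed simp
  next
    case False
    then have "i \<in> D" "i \<noteq> t" using i by auto
    then have "j \<in> D" using dual_ideals_upward[OF D] j by blast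
    moreover have "j \<noteq> t" using t_min \<open>i \<in> D\<close> \<open>i \<noteq> t\<close> j unfolding minel_def by blast
    ultimately show ?thesis by blast
  qed
qed

text \<open>Here the choice of l as the highest violation is used: an element strictly above t has
  length at least l + 2 and therefore lies above y.\<close>
lemma minel_exchange_subset:
  assumes above: "hierarchical_above \<Omega> le l"
    and t: "t \<in> frontier \<Omega> le l" and y: "y \<in> \<Omega>" "len \<Omega> le y = l + 1" "t \<noteq> y"
    and s: "s \<in> \<Omega>" "le s y" "s \<noteq> y"
  defines "D \<equiv> up_closure \<Omega> le (frontier \<Omega> le l)"
  shows "minel le (insert s (D - {t})) \<subseteq> insert s (frontier \<Omega> le l - {t, y})"
proof
  fix d assume d: "d \<in> minel le (insert s (D - {t}))"
  then have d_min: "\<And>e. e \<in> insert s (D - {t}) \<Longrightarrow> le e d \<Longrightarrow> e = d" unfolding minel_def by blast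
  have F_D: "frontier \<Omega> le l \<subseteq> D" unfolding D_def by (rule subset_up_closure[OF frontier_subset])
  have yF: "y \<in> frontier \<Omega> le l" using len_eq_imp_frontier y by blast
  show "d \<in> insert s (frontier \<Omega> le l - {t, y})"
  proof (cases "d = s")
    case False
    then have dD: "d \<in> D" "d \<noteq> t" using d unfolding minel_def by auto
    have "d \<noteq> y" using d_min[of s] s False by blast
    moreover have "d \<in> frontier \<Omega> le l"
    proof -
      obtain q where q: "q \<in> frontier \<Omega> le l" "le q d" using dD unfolding D_def up_closure_def by blast
      show ?thesis
      proof (cases "q = t")
        case False
        then show ?thesis using q F_D d_min by blast
      next
        case True
        have "d \<in> \<Omega>" using dD up_closure_subset[of \<Omega> le "frontier \<Omega> le l"] unfolding D_def by blast
        then have "l + 2 \<le> len \<Omega> le d" using t q True dD unfolding frontier_def by blast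
        then have "le y d" using above y \<open>d \<in> \<Omega>\<close> unfolding hierarchical_above_def by simp
        then show ?thesis using d_min[of y] yF F_D y \<open>d \<noteq> y\<close> by blast
      qed
    qed
    ultimately show ?thesis using dD by blast
  qed simp
qed

lemma exchange_frontier:
  assumes above: "hierarchical_above \<Omega> le l"
    and t: "t \<in> frontier \<Omega> le l" and y: "y \<in> \<Omega>" "len \<Omega> le y = l + 1" "t \<noteq> y"
    and s: "s \<in> \<Omega>" "le s y" "s \<noteq> y" "l \<le> len \<Omega> le s" "\<not> le s t"
  defines "D \<equiv> up_closure \<Omega> le (frontier \<Omega> le l)"
  shows "insert s (D - {t}) \<in> dual_ideals \<Omega> le"
    and "card (insert s (D - {t})) = card D"
    and "card (minel le (insert s (D - {t}))) < card (minel le D)"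
proof -
  let ?F = "frontier \<Omega> le l"
  show "insert s (D - {t}) \<in> dual_ideals \<Omega> le"
    using exchange_in_dual_ideals[OF t s(1,4,5)] unfolding D_def .
  have "finite D" using finite_subset[OF up_closure_subset finite_carrier] unfolding D_def .
  moreover have "s \<notin> D"
    using strictly_below_antichain_notin_up_closure[OF frontier_subset antichain_frontier
        len_eq_imp_frontier[OF y(1,2)] s(1-3)] unfolding D_def .
  moreover have "t \<in> D" using subset_up_closure[OF frontier_subset[of \<Omega> le l]] t unfolding D_def by blast
  ultimately show "card (insert s (D - {t})) = card D" using card_Suc_Diff1[of D t] by simp
  have fin: "finite ?F" using finite_subset[OF frontier_subset finite_carrier] .
  have sub: "{t, y} \<subseteq> ?F" using t len_eq_imp_frontier y by blast
  then have "card (?F - {t, y}) + 2 = card ?F"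
    using card_Diff_subset[OF _ sub] card_mono[OF fin sub] y(3) by simp
  moreover have "card (minel le (insert s (D - {t}))) \<le> card (insert s (?F - {t, y}))"
    using minel_exchange_subset[OF above t y s(1-3)] fin unfolding D_def by (intro card_mono) auto
  moreover have "card (insert s (?F - {t, y})) \<le> Suc (card (?F - {t, y}))"
    using fin by (simp add: card_insert_if)
  ultimately show "card (minel le (insert s (D - {t}))) < card (minel le D)"
    unfolding D_def minel_up_closure_frontier by linarith
qed

end

theorem proposition3p3:
  fixes \<Omega> :: "'a set" and le :: "'a \<Rightarrow> 'a \<Rightarrow> bool"
    and \<tau> \<eta> :: "'a \<Rightarrow> 'k::field"
  assumes "finite \<Omega>"
    and "poset_on \<Omega> le"
    and "\<forall>i\<in>\<Omega>. \<tau> i \<noteq> 0"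
    and "\<forall>B\<in>dual_ideals \<Omega> le. \<forall>D\<in>dual_ideals \<Omega> le.
           card B = card D \<longrightarrow> pi_poly le \<tau> \<eta> \<Omega> B = pi_poly le \<tau> \<eta> \<Omega> D"
  shows "hierarchical \<Omega> le"
proof (rule ccontr)
  assume "\<not> hierarchical \<Omega> le"
  interpret finite_poset \<Omega> le using assms(1,2) by unfold_locales
  obtain l u v where uv: "u \<in> \<Omega>" "v \<in> \<Omega>" "len \<Omega> le u = l" "len \<Omega> le v = l + 1" "\<not> le u v"
    and above: "hierarchical_above \<Omega> le l"
    using highest_violation[OF \<open>\<not> hierarchical \<Omega> le\<close>] .
  obtain t y s where tys: "t \<in> frontier \<Omega> le l" "y \<in> \<Omega>" "len \<Omega> le y = l + 1" "t \<noteq> y"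
    "s \<in> \<Omega>" "le s y" "s \<noteq> y" "l \<le> len \<Omega> le s" "\<not> le s t"
    using exchange_triple[OF uv] .
  define D where "D = up_closure \<Omega> le (frontier \<Omega> le l)"
  define D' where "D' = insert s (D - {t})"
  have D: "D \<in> dual_ideals \<Omega> le"
    unfolding D_def by (rule up_closure_in_dual_ideals[OF frontier_subset])
  have covered: "\<forall>c\<in>\<Omega> - D. \<exists>q\<in>minel le D. le c q"
    unfolding D_def minel_up_closure_frontier by (rule frontier_dominates_complement)
  have D': "D' \<in> dual_ideals \<Omega> le" and card_D': "card D' = card D"
    and "card (minel le D') < card (minel le D)"
    using exchange_frontier[OF above tys] unfolding D'_def D_def by blast+
  then have "degree (pi_poly le \<tau> \<eta> \<Omega> D') < degree (pi_poly le \<tau> \<eta> \<Omega> D)"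
    using degree_pi_poly_less[OF assms(1) D D' covered assms(3)] by blast
  moreover have "pi_poly le \<tau> \<eta> \<Omega> D = pi_poly le \<tau> \<eta> \<Omega> D'"
    using assms(4)[rule_format, OF D D'] card_D' by simp
  ultimately show False by simp
qed

end
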